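(* Let $\mathcal{A}$ be a finite-dimensional $C^*$-algebra with a faithful trace $\tau$, and let $\{a_j\}_{j=1}^m$ be an orthonormal basis of $\mathcal{A}$ with respect to $\tau$. Then \[ \sum_{j=1}^m Ja_jJ\otimes a_j\geq 0 \] in $\mathcal{A}'\otimes\mathcal{A}$.
   Context: $L^2(\mathcal{A},\tau)$ is the GNS Hilbert space of $\tau$ with cyclic vacuum vector $\Omega$ and inner product $\langle a\Omega,b\Omega\rangle=\tau(b^*a)$; $\mathcal{A}$ acts on it by left multiplication, and $\mathcal{A}'$ is the commutant. $J$ is the modular conjugation, the antiunitary $J(a\Omega)=a^*\Omega$, so that $J\mathcal{A}J=\mathcal{A}'$. Orthonormality is with respect to $\langle a,b\rangle=\tau(b^*a)$. *)

theory Defs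
  imports "HOL-Analysis.Analysis" "HOL-Library.Complex_Order"
begin

text \<open>Finite-dimensional C*-algebras are realised concretely as *-subalgebras of
  the n x n complex matrices (every finite-dimensional C*-algebra is *-isomorphic to one).\<close>

type_synonym 'n cmat = "complex ^ 'n ^ 'n"

definition madj :: "'n::finite cmat \<Rightarrow> 'n cmat" where
  "madj M = (\<chi> i j. cnj (M $ j $ i))"

definition star_subalgebra :: "'n::finite cmat set \<Rightarrow> bool" where
  "star_subalgebra A \<longleftrightarrow> 0 \<in> A \<and>
     (\<forall>x\<in>A. \<forall>y\<in>A. x + y \<in> A \<and> x ** y \<in> A) \<and>
     (\<forall>c. \<forall>x\<in>A. (\<chi> i j. c * x $ i $ j) \<in> A) \<and>
     (\<forall>x\<in>A. madj x \<in> A)"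

definition faithful_trace :: "'n::finite cmat set \<Rightarrow> ('n cmat \<Rightarrow> complex) \<Rightarrow> bool" where
  "faithful_trace A \<tau> \<longleftrightarrow>
     (\<forall>x\<in>A. \<forall>y\<in>A. \<tau> (x + y) = \<tau> x + \<tau> y) \<and>
     (\<forall>c. \<forall>x\<in>A. \<tau> (\<chi> i j. c * x $ i $ j) = c * \<tau> x) \<and>
     (\<forall>x\<in>A. \<forall>y\<in>A. \<tau> (x ** y) = \<tau> (y ** x)) \<and>
     (\<forall>x\<in>A. 0 \<le> \<tau> (madj x ** x)) \<and>
     (\<forall>x\<in>A. \<tau> (madj x ** x) = 0 \<longrightarrow> x = 0)"

text \<open>GNS inner product on L^2(A,tau): <a Omega, b Omega> = tau(b^* a).\<close>
definition gns_inner :: "('n::finite cmat \<Rightarrow> complex) \<Rightarrow> 'n cmat \<Rightarrow> 'n cmat \<Rightarrow> complex" where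
  "gns_inner \<tau> a b = \<tau> (madj b ** a)"

text \<open>Orthonormal basis a_1..a_m (indexed 0..m-1) of A w.r.t. the GNS inner product.\<close>
definition tau_orthonormal_basis ::
  "'n::finite cmat set \<Rightarrow> ('n cmat \<Rightarrow> complex) \<Rightarrow> (nat \<Rightarrow> 'n cmat) \<Rightarrow> nat \<Rightarrow> bool" where
  "tau_orthonormal_basis A \<tau> a m \<longleftrightarrow>
     (\<forall>j<m. a j \<in> A) \<and>
     (\<forall>j<m. \<forall>k<m. gns_inner \<tau> (a j) (a k) = (if j = k then 1 else 0)) \<and>
     (\<forall>x\<in>A. \<exists>c. x = (\<Sum>j<m. (\<chi> p q. c j * a j $ p $ q)))"

text \<open>Modular conjugation J on L^2(A,tau): J(x Omega) = x^* Omega; hence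
  (J a J)(x Omega) = x a^* Omega.  Left multiplication by a: x Omega \<mapsto> a x Omega.\<close>
definition modJ :: "'n::finite cmat \<Rightarrow> 'n cmat" where
  "modJ x = madj x"

definition JaJ :: "'n::finite cmat \<Rightarrow> 'n cmat \<Rightarrow> 'n cmat" where
  "JaJ a x = modJ (a ** modJ x)"

text \<open>Inner product on the (algebraic = Hilbert, finite-dim) tensor product
  L^2(A) \<otimes> L^2(A), extended sesquilinearly from simple tensors.\<close>
definition tensor_inner ::
  "('n::finite cmat \<Rightarrow> complex) \<Rightarrow> 'n cmat \<times> 'n cmat \<Rightarrow> 'n cmat \<times> 'n cmat \<Rightarrow> complex" where
  "tensor_inner \<tau> u v = gns_inner \<tau> (fst u) (fst v) * gns_inner \<tau> (snd u) (snd v)"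

text \<open>Quadratic form <T xi, xi> of T = sum_j J a_j J \<otimes> a_j at
  xi = sum_{k<N} x_k \<otimes> y_k, computed on simple tensors and extended by linearity.\<close>
definition quad_form ::
  "('n::finite cmat \<Rightarrow> complex) \<Rightarrow> (nat \<Rightarrow> 'n cmat) \<Rightarrow> nat \<Rightarrow> (nat \<Rightarrow> 'n cmat) \<Rightarrow> (nat \<Rightarrow> 'n cmat) \<Rightarrow> nat \<Rightarrow> complex" where
  "quad_form \<tau> a m x y N =
     (\<Sum>k<N. \<Sum>l<N. \<Sum>j<m.
        tensor_inner \<tau> (JaJ (a j) (x k), a j ** y k) (x l, y l))"

end

theory Submission
  imports Defs
begin

text \<open>For simple tensors the quadratic form is a double sum over pairs of terms
  \<open>\<tau>(x\<^sub>l\<^sup>* x\<^sub>k a\<^sub>j\<^sup>*) \<tau>(y\<^sub>l\<^sup>* a\<^sub>j y\<^sub>k)\<close>, since \<open>J a J\<close> acts by right multiplication with \<open>a\<^sup>*\<close>.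
  By traciality these are \<open>\<tau>(a\<^sub>j\<^sup>* z) \<tau>(w a\<^sub>j)\<close> with \<open>z = x\<^sub>l\<^sup>* x\<^sub>k\<close>, \<open>w = y\<^sub>k y\<^sub>l\<^sup>*\<close>, and
  Parseval's identity \<open>\<Sum>\<^sub>j \<tau>(a\<^sub>j\<^sup>* z) \<tau>(w a\<^sub>j) = \<tau>(w z)\<close> collapses the sum over \<open>j\<close> to
  \<open>\<tau>((x\<^sub>l y\<^sub>l)\<^sup>* (x\<^sub>k y\<^sub>k))\<close>.  Summing over \<open>k, l\<close> gives \<open>\<tau>(s\<^sup>* s)\<close> with \<open>s = \<Sum>\<^sub>k x\<^sub>k y\<^sub>k\<close>,
  which is nonnegative by positivity of the trace.\<close>

definition mat_scale :: "complex \<Rightarrow> 'n::finite cmat \<Rightarrow> 'n cmat" where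
  "mat_scale c x = (\<chi> i j. c * x $ i $ j)"

lemma matrix_mul_mat_scale_right: "(x::'n::finite cmat) ** mat_scale c y = mat_scale c (x ** y)"
  by (simp add: mat_scale_def matrix_matrix_mult_def vec_eq_iff sum_distrib_left algebra_simps)

lemma matrix_add_rdistrib: "((B::'n::finite cmat) + C) ** A = B ** A + C ** A"
  by (simp add: matrix_matrix_mult_def vec_eq_iff distrib_right sum.distrib)

lemma matrix_mul_lzero [simp]: "(0::'n::finite cmat) ** A = 0"
  and matrix_mul_rzero [simp]: "(A::'n::finite cmat) ** 0 = 0"
  by (simp_all add: matrix_matrix_mult_def vec_eq_iff)

lemma matrix_mul_sum_left: "(\<Sum>k\<in>S. f k :: 'n::finite cmat) ** A = (\<Sum>k\<in>S. f k ** A)"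
  by (induction S rule: infinite_finite_induct) (simp_all add: matrix_add_rdistrib)

lemma matrix_mul_sum_right: "(A :: 'n::finite cmat) ** (\<Sum>k\<in>S. f k) = (\<Sum>k\<in>S. A ** f k)"
  by (induction S rule: infinite_finite_induct) (simp_all add: matrix_add_ldistrib)

lemma madj_matrix_mul: "madj ((x::'n::finite cmat) ** y) = madj y ** madj x"
  by (simp add: madj_def matrix_matrix_mult_def vec_eq_iff mult.commute)

lemma madj_madj [simp]: "madj (madj (x::'n::finite cmat)) = x"
  by (simp add: madj_def vec_eq_iff)

lemma madj_sum: "madj (\<Sum>k\<in>S. f k) = (\<Sum>k\<in>S. madj (f k::'n::finite cmat))"
  by (induction S rule: infinite_finite_induct) (auto simp: madj_def vec_eq_iff)

lemma JaJ_eq: "JaJ a x = x ** madj a"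
  by (simp add: JaJ_def modJ_def madj_matrix_mul)

locale traced_star_algebra =
  fixes A :: "'n::finite cmat set" and \<tau> :: "'n cmat \<Rightarrow> complex"
  assumes star_subalgebra: "star_subalgebra A"
    and faithful_trace: "faithful_trace A \<tau>"
begin

lemma zero_mem: "0 \<in> A"
  and add_mem: "x \<in> A \<Longrightarrow> y \<in> A \<Longrightarrow> x + y \<in> A"
  and mult_mem: "x \<in> A \<Longrightarrow> y \<in> A \<Longrightarrow> x ** y \<in> A"
  and madj_mem: "x \<in> A \<Longrightarrow> madj x \<in> A"
  and mat_scale_mem: "x \<in> A \<Longrightarrow> mat_scale c x \<in> A"
  using star_subalgebra by (simp_all add: star_subalgebra_def mat_scale_def)

lemma sum_mem: "(\<And>k. k \<in> S \<Longrightarrow> f k \<in> A) \<Longrightarrow> (\<Sum>k\<in>S. f k) \<in> A"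
  by (induction S rule: infinite_finite_induct) (auto simp: zero_mem add_mem)

lemma trace_add: "x \<in> A \<Longrightarrow> y \<in> A \<Longrightarrow> \<tau> (x + y) = \<tau> x + \<tau> y"
  and trace_mat_scale: "x \<in> A \<Longrightarrow> \<tau> (mat_scale c x) = c * \<tau> x"
  and trace_commute: "x \<in> A \<Longrightarrow> y \<in> A \<Longrightarrow> \<tau> (x ** y) = \<tau> (y ** x)"
  and trace_madj_mul_self_nonneg: "x \<in> A \<Longrightarrow> 0 \<le> \<tau> (madj x ** x)"
  using faithful_trace by (simp_all add: faithful_trace_def mat_scale_def)

lemma trace_zero: "\<tau> 0 = 0"
  using trace_add[OF zero_mem zero_mem] by simp

lemma trace_sum: "(\<And>k. k \<in> S \<Longrightarrow> f k \<in> A) \<Longrightarrow> \<tau> (\<Sum>k\<in>S. f k) = (\<Sum>k\<in>S. \<tau> (f k))"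
  by (induction S rule: infinite_finite_induct) (simp_all add: trace_zero trace_add sum_mem)

context
  fixes a :: "nat \<Rightarrow> 'n cmat" and m :: nat
  assumes onb: "tau_orthonormal_basis A \<tau> a m"
begin

lemma basis_mem: "j < m \<Longrightarrow> a j \<in> A"
  using onb by (simp add: tau_orthonormal_basis_def)

lemma basis_coefficient:
  assumes "i < m"
  shows "\<tau> (madj (a i) ** (\<Sum>j<m. mat_scale (c j) (a j))) = c i"
proof -
  have "\<tau> (madj (a i) ** (\<Sum>j<m. mat_scale (c j) (a j)))
      = (\<Sum>j<m. c j * \<tau> (madj (a i) ** a j))"
    using assms unfolding matrix_mul_sum_right matrix_mul_mat_scale_right
    by (subst trace_sum)
      (auto intro!: sum.cong trace_mat_scale mat_scale_mem mult_mem madj_mem basis_mem)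
  also have "\<dots> = (\<Sum>j<m. if j = i then c j else 0)"
    using onb assms by (intro sum.cong) (auto simp: tau_orthonormal_basis_def gns_inner_def)
  finally show ?thesis
    using assms by simp
qed

lemma trace_parseval:
  assumes z: "z \<in> A" and w: "w \<in> A"
  shows "(\<Sum>j<m. \<tau> (madj (a j) ** z) * \<tau> (w ** a j)) = \<tau> (w ** z)"
proof -
  obtain c where z_eq: "z = (\<Sum>j<m. mat_scale (c j) (a j))"
    using onb z by (auto simp: tau_orthonormal_basis_def mat_scale_def)
  have "\<tau> (w ** z) = (\<Sum>j<m. c j * \<tau> (w ** a j))"
    unfolding z_eq matrix_mul_sum_right matrix_mul_mat_scale_right using w
    by (subst trace_sum)
      (auto intro!: sum.cong trace_mat_scale mat_scale_mem mult_mem basis_mem)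
  also have "\<dots> = (\<Sum>j<m. \<tau> (madj (a j) ** z) * \<tau> (w ** a j))"
    unfolding z_eq by (simp add: basis_coefficient)
  finally show ?thesis ..
qed

lemma tensor_inner_JaJ:
  assumes "b \<in> A" "x \<in> A" "y \<in> A" "x' \<in> A" "y' \<in> A"
  shows "tensor_inner \<tau> (JaJ b x, b ** y) (x', y')
    = \<tau> (madj b ** (madj x' ** x)) * \<tau> ((y ** madj y') ** b)"
proof -
  have "\<tau> ((madj x' ** x) ** madj b) = \<tau> (madj b ** (madj x' ** x))"
    using assms by (simp add: trace_commute mult_mem madj_mem)
  moreover have "\<tau> ((madj y' ** b) ** y) = \<tau> (y ** (madj y' ** b))"
    using assms by (simp add: trace_commute mult_mem madj_mem)
  ultimately show ?thesis
    by (simp add: tensor_inner_def gns_inner_def JaJ_eq matrix_mul_assoc)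
qed

lemma sum_tensor_inner_JaJ:
  assumes "x \<in> A" "y \<in> A" "x' \<in> A" "y' \<in> A"
  shows "(\<Sum>j<m. tensor_inner \<tau> (JaJ (a j) x, a j ** y) (x', y'))
    = \<tau> (madj (x' ** y') ** (x ** y))"
proof -
  have "(\<Sum>j<m. tensor_inner \<tau> (JaJ (a j) x, a j ** y) (x', y'))
      = (\<Sum>j<m. \<tau> (madj (a j) ** (madj x' ** x)) * \<tau> ((y ** madj y') ** a j))"
    using assms by (simp add: tensor_inner_JaJ basis_mem)
  also have "\<dots> = \<tau> ((y ** madj y') ** (madj x' ** x))"
    using assms by (simp add: trace_parseval mult_mem madj_mem)
  also have "\<dots> = \<tau> (x ** ((y ** madj y') ** madj x'))"
    using trace_commute[of "(y ** madj y') ** madj x'" x] assms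
    by (simp add: mult_mem madj_mem matrix_mul_assoc)
  also have "\<dots> = \<tau> (madj (x' ** y') ** (x ** y))"
    using trace_commute[of "x ** y" "madj (x' ** y')"] assms
    by (simp add: mult_mem madj_mem madj_matrix_mul matrix_mul_assoc)
  finally show ?thesis .
qed

lemma quad_form_eq_trace:
  assumes "\<forall>k<N. x k \<in> A \<and> y k \<in> A"
  shows "quad_form \<tau> a m x y N
    = \<tau> (madj (\<Sum>k<N. x k ** y k) ** (\<Sum>k<N. x k ** y k))"
proof -
  have "quad_form \<tau> a m x y N = (\<Sum>k<N. \<Sum>l<N. \<tau> (madj (x l ** y l) ** (x k ** y k)))"
    using assms by (simp add: quad_form_def sum_tensor_inner_JaJ)
  also have "\<dots> = \<tau> (\<Sum>k<N. \<Sum>l<N. madj (x l ** y l) ** (x k ** y k))"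
  proof -
    have "madj (x l ** y l) ** (x k ** y k) \<in> A" if "k < N" "l < N" for k l
      using assms that by (simp add: mult_mem madj_mem)
    then show ?thesis
      by (subst trace_sum) (auto intro!: sum_mem sum.cong trace_sum[symmetric])
  qed
  also have "\<dots> = \<tau> (madj (\<Sum>k<N. x k ** y k) ** (\<Sum>k<N. x k ** y k))"
    by (simp add: madj_sum matrix_mul_sum_left matrix_mul_sum_right)
  finally show ?thesis .
qed

end

end

theorem mainTheorem12:
  fixes A :: "'n::finite cmat set" and \<tau> :: "'n cmat \<Rightarrow> complex"
    and a :: "nat \<Rightarrow> 'n cmat" and m :: nat
  assumes "star_subalgebra A"
    and "faithful_trace A \<tau>"
    and "tau_orthonormal_basis A \<tau> a m"
  shows "\<forall>N x y. (\<forall>k<N. x k \<in> A \<and> y k \<in> A) \<longrightarrow> 0 \<le> quad_form \<tau> a m x y N"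
proof (intro allI impI)
  fix N :: nat and x y :: "nat \<Rightarrow> 'n cmat"
  assume xy: "\<forall>k<N. x k \<in> A \<and> y k \<in> A"
  interpret traced_star_algebra A \<tau>
    using assms(1,2) by unfold_locales
  have "(\<Sum>k<N. x k ** y k) \<in> A"
    using xy by (auto intro!: sum_mem mult_mem)
  then show "0 \<le> quad_form \<tau> a m x y N"
    using quad_form_eq_trace[OF assms(3) xy] trace_madj_mul_self_nonneg by simp
qed

end
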